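(* Let $|\Omega\rangle=d^{-1/2}\sum_{j=1}^d|j,j\rangle\in\mathbb{C}^d\otimes\mathbb{C}^d$, let $\mathcal{S}=\{\rho\in\mathcal{M}_{d^2}:\rho\ge0,\ \operatorname{tr}_1\rho=\operatorname{tr}_2\rho=\mathbb{1}/d\}$ and $\mathcal{U}=\mathrm{conv}\{(\mathbb{1}\otimes U)|\Omega\rangle\langle\Omega|(\mathbb{1}\otimes U^\dagger): U\in\mathcal{M}_d\text{ unitary}\}$. Let $\rho\in\mathcal{S}$. Then $\rho\in\mathcal{U}$ if and only if $\operatorname{tr}[W\rho]\ge0$ for every Hermitian $W\in\mathcal{M}_{d^2}$ satisfying $\operatorname{tr}_1W=\operatorname{tr}_2W=\mathbb{1}/d$ and $\operatorname{tr}[W\sigma]\ge0$ for all $\sigma\in\mathcal{U}$.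
   Context: $\operatorname{tr}_1,\operatorname{tr}_2$ denote the partial traces over the first and second tensor factor of $\mathbb{C}^d\otimes\mathbb{C}^d$. $\mathcal{S}$ is the set of Jamiolkowski states $(\mathrm{id}\otimes T)(|\Omega\rangle\langle\Omega|)$ of unital channels $T$, and $\mathcal{U}$ that of mixtures of unitary channels. *)

theory Defs
  imports "HOL-Analysis.Analysis"
begin

text \<open>Matrices on C^d (x) C^d are indexed by pairs ('n \<times> 'n), d = CARD('n).
  Entry A $ (i,k) $ (j,l) is the coefficient of |i,k><j,l|.\<close>

type_synonym ('n) bimat = "complex ^ ('n \<times> 'n) ^ ('n \<times> 'n)"

definition cnonneg :: "complex \<Rightarrow> bool" where
  "cnonneg z \<longleftrightarrow> z \<in> \<real> \<and> 0 \<le> Re z"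

definition cadjoint :: "complex ^'m ^'m \<Rightarrow> complex ^'m ^'m" where
  "cadjoint A = (\<chi> i j. cnj (A $ j $ i))"

definition hermitian :: "complex ^'m ^'m \<Rightarrow> bool" where
  "hermitian A \<longleftrightarrow> cadjoint A = A"

definition psd :: "complex ^'m ^'m \<Rightarrow> bool" where
  "psd A \<longleftrightarrow> (\<forall>v :: complex ^'m. cnonneg (\<Sum>i\<in>UNIV. \<Sum>j\<in>UNIV. cnj (v $ i) * A $ i $ j * v $ j))"

definition unitary :: "complex ^'n ^'n \<Rightarrow> bool" where
  "unitary U \<longleftrightarrow> cadjoint U ** U = mat 1"

definition ptr1 :: "'n bimat \<Rightarrow> complex ^'n ^'n" where
  "ptr1 A = (\<chi> k l. \<Sum>i\<in>UNIV. A $ (i,k) $ (i,l))"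

definition ptr2 :: "'n bimat \<Rightarrow> complex ^'n ^'n" where
  "ptr2 A = (\<chi> i j. \<Sum>k\<in>UNIV. A $ (i,k) $ (j,k))"

definition Omega :: "complex ^ ('n::finite \<times> 'n)" where
  "Omega = (\<chi> p. if fst p = snd p then complex_of_real (1 / sqrt (real CARD('n))) else 0)"

definition Omega_proj :: "('n::finite) bimat" where
  "Omega_proj = (\<chi> p q. Omega $ p * cnj (Omega $ q))"

definition id_tensor :: "complex ^'n ^'n \<Rightarrow> 'n bimat" where
  "id_tensor U = (\<chi> p q. if fst p = fst q then U $ snd p $ snd q else 0)"

definition max_mixed :: "complex ^('n::finite) ^'n" where
  "max_mixed = mat (1 / of_nat CARD('n))"

definition Sset :: "('n::finite) bimat set" where
  "Sset = {\<rho>. psd \<rho> \<and> ptr1 \<rho> = max_mixed \<and> ptr2 \<rho> = max_mixed}"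

definition Uset :: "('n::finite) bimat set" where
  "Uset = convex hull {id_tensor U ** Omega_proj ** cadjoint (id_tensor U) | U. unitary U}"

end

theory Submission
  imports Defs
begin

text \<open>The set \<open>\<U>\<close> is compact and convex, so a state \<open>\<rho> \<notin> \<U>\<close> is strictly separated from it by a
  Hermitian \<open>H\<close>: \<open>tr[H\<rho>] < b < tr[H\<sigma>]\<close> for \<open>\<sigma> \<in> \<U>\<close>. Subtracting from \<open>H\<close> its orthogonal projection
  onto \<open>\<one> \<otimes> \<M>\<^sub>d + \<M>\<^sub>d \<otimes> \<one>\<close> changes \<open>tr[H\<sigma>]\<close>, for \<open>\<sigma>\<close> with maximally mixed marginals, only by the
  constant \<open>tr[H]/d\<^sup>2\<close>. That constant is the value at \<open>\<one>/d\<^sup>2\<close>, which lies in \<open>\<U>\<close> as the uniform average of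
  the maximally entangled states of all signed permutation matrices; hence it exceeds \<open>b\<close>, and a
  suitable positive multiple of the projected \<open>H\<close> plus \<open>\<one>/d\<^sup>2\<close> is a witness \<open>W\<close> with \<open>tr[W\<sigma>] \<ge> 0\<close>
  on \<open>\<U>\<close> but \<open>tr[W\<rho>] < 0\<close>.\<close>

lemma sum_UNIV_pair:
  "(\<Sum>p\<in>(UNIV :: ('a::finite \<times> 'b::finite) set). f p) = (\<Sum>i\<in>UNIV. \<Sum>k\<in>UNIV. f (i, k))"
  by (simp add: sum.cartesian_product UNIV_Times_UNIV[symmetric] del: UNIV_Times_UNIV)

lemma sum_rotate3:
  "(\<Sum>i\<in>A. \<Sum>k\<in>B. \<Sum>l\<in>C. f i k l) = (\<Sum>k\<in>B. \<Sum>l\<in>C. \<Sum>i\<in>A. (f i k l :: 'a::comm_monoid_add))"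
  by (subst sum.swap) (simp add: sum.swap[of _ A C])

lemma if_zero_mult: "(if c then a else 0) * (b :: 'a::mult_zero) = (if c then a * b else 0)"
  by simp

lemma mult_if_zero: "(a :: 'a::mult_zero) * (if c then b else 0) = (if c then a * b else 0)"
  by simp

lemma if_zero_divide: "(if c then a else 0) / (b :: 'a::field) = (if c then a / b else 0)"
  by simp

lemma cnj_if_zero: "cnj (if c then a else 0) = (if c then cnj a else 0)"
  by simp

lemma sum_if_zero: "(\<Sum>l\<in>A. if P then f l else 0) = (if P then (\<Sum>l\<in>A. f l) else (0 :: 'a::comm_monoid_add))"
  by simp

lemma scaleR_complex: "r *\<^sub>R (z :: complex) = of_real r * z"
  by (simp add: scaleR_conv_of_real)

lemma matrix_add_rdistrib: "(A + B) ** (C :: complex^'a^'b) = A ** C + B ** C"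
  by (simp add: matrix_matrix_mult_def vec_eq_iff sum.distrib distrib_right)

lemma matrix_diff_rdistrib: "(A - B) ** (C :: complex^'a^'b) = A ** C - B ** C"
  by (simp add: matrix_matrix_mult_def vec_eq_iff sum_subtractf left_diff_distrib)

lemma matrix_scaleR_left: "(c *\<^sub>R A) ** (B :: complex^'a^'b) = c *\<^sub>R (A ** B)"
  by (simp add: matrix_matrix_mult_def vec_eq_iff scaleR_sum_right)

lemma trace_scaleR: "trace (c *\<^sub>R A) = c *\<^sub>R trace (A :: complex^'n^'n)"
  by (simp add: trace_def scaleR_sum_right)

lemma trace_mult_mat: "trace (A ** mat k) = trace A * (k :: complex)"
  by (simp add: trace_def matrix_matrix_mult_def mat_def sum_distrib_right if_distrib cong: if_cong)

lemma hermitian_entry: "hermitian A \<Longrightarrow> A $ j $ i = cnj (A $ i $ j)"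
  unfolding hermitian_def cadjoint_def by (metis complex_cnj_cnj vec_lambda_beta)

lemma hermitianI:
  assumes "\<And>i j. A $ j $ i = cnj (A $ i $ j)" shows "hermitian A"
  unfolding hermitian_def cadjoint_def vec_eq_iff using assms by (metis complex_cnj_cnj vec_lambda_beta)

lemma hermitian_add: "hermitian A \<Longrightarrow> hermitian B \<Longrightarrow> hermitian (A + B)"
  by (rule hermitianI) (simp add: hermitian_entry[of A, symmetric] hermitian_entry[of B, symmetric])

lemma hermitian_diff: "hermitian A \<Longrightarrow> hermitian B \<Longrightarrow> hermitian (A - B)"
  by (rule hermitianI) (simp add: hermitian_entry[of A, symmetric] hermitian_entry[of B, symmetric])

lemma hermitian_scaleR: "hermitian A \<Longrightarrow> hermitian (c *\<^sub>R A)"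
  by (rule hermitianI) (simp add: hermitian_entry[of A, symmetric])

lemma hermitian_mat_1: "hermitian (mat 1)"
  by (rule hermitianI) (simp add: mat_def)

lemma trace_hermitian_eq_Re:
  assumes "hermitian A" shows "trace A = of_real (Re (trace A))"
proof -
  have "Im (A $ i $ i) = 0" for i
    using hermitian_entry[OF assms, of i i] by (simp add: complex_eq_iff)
  then show ?thesis by (simp add: complex_eq_iff trace_def Im_sum)
qed

lemma trace_mult_hermitian_real:
  assumes "hermitian A" "hermitian B" shows "trace (A ** B) \<in> \<real>"
proof -
  have "cnj (trace (A ** B)) = trace (B ** A)"
    by (simp add: trace_def matrix_matrix_mult_def hermitian_entry[OF assms(1), symmetric]
        hermitian_entry[OF assms(2), symmetric] mult.commute)
  then show ?thesis by (metis Reals_cnj_iff trace_mul_sym)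
qed

lemma quadratic_form_indicator:
  fixes A :: "complex^'m::finite^'m"
  shows "(\<Sum>i\<in>UNIV. \<Sum>j\<in>UNIV. cnj ((\<chi> i. if i = a then 1 else 0) $ i) * A $ i $ j *
            (\<chi> i. if i = a then 1 else 0) $ j) = A $ a $ a"
  by (simp add: if_zero_mult mult_if_zero cnj_if_zero sum_if_zero cong: if_cong)

lemma quadratic_form_two_entries:
  fixes A :: "complex^'m::finite^'m"
  assumes "a \<noteq> b"
  shows "(\<Sum>i\<in>UNIV. \<Sum>j\<in>UNIV. cnj ((\<chi> i. (if i = a then x else 0) + (if i = b then y else 0)) $ i) * A $ i $ j *
            (\<chi> i. (if i = a then x else 0) + (if i = b then y else 0)) $ j)
       = cnj x * A $ a $ a * x + cnj x * A $ a $ b * y + cnj y * A $ b $ a * x + cnj y * A $ b $ b * y"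
  using assms
  by (simp add: distrib_left distrib_right sum.distrib if_zero_mult mult_if_zero cnj_if_zero sum_if_zero cong: if_cong)

text \<open>Only the reality of the quadratic form is used: testing it on \<open>e\<^sub>i\<close>, \<open>e\<^sub>i + e\<^sub>j\<close>
  and \<open>e\<^sub>i + \<i> e\<^sub>j\<close> recovers \<open>A\<^sub>j\<^sub>i = cnj A\<^sub>i\<^sub>j\<close>.\<close>
lemma psd_hermitian:
  fixes A :: "complex^'m::finite^'m"
  assumes "psd A" shows "hermitian A"
proof (rule hermitianI)
  fix i j
  have real: "Im (\<Sum>i\<in>UNIV. \<Sum>j\<in>UNIV. cnj (v $ i) * A $ i $ j * v $ j) = 0" for v :: "complex^'m"
    using assms unfolding psd_def cnonneg_def by (simp add: complex_is_Real_iff)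
  have diag: "Im (A $ a $ a) = 0" for a
    using real[of "\<chi> i. if i = a then 1 else 0"] unfolding quadratic_form_indicator .
  show "A $ j $ i = cnj (A $ i $ j)"
  proof (cases "i = j")
    case True
    then show ?thesis using diag[of i] by (simp add: complex_eq_iff)
  next
    case False
    have "Im (A $ i $ j + A $ j $ i) = 0"
      using real[of "\<chi> k. (if k = i then 1 else 0) + (if k = j then 1 else 0)"]
        quadratic_form_two_entries[OF False, where A=A and x=1 and y=1] diag[of i] diag[of j]
      by (simp only:) simp
    moreover have "Re (A $ i $ j - A $ j $ i) = 0"
      using real[of "\<chi> k. (if k = i then 1 else 0) + (if k = j then \<i> else 0)"]
        quadratic_form_two_entries[OF False, where A=A and x=1 and y="\<i>"] diag[of i] diag[of j]
      by (simp only:) simp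
    ultimately show ?thesis by (simp add: complex_eq_iff)
  qed
qed

definition tensor_id :: "complex^'n^'n \<Rightarrow> 'n bimat" where
  "tensor_id B = (\<chi> p q. if snd p = snd q then B $ fst p $ fst q else 0)"

lemma trace_id_tensor_mult: "trace (id_tensor A ** X) = trace (A ** ptr1 X)"
  by (simp add: trace_def matrix_matrix_mult_def ptr1_def id_tensor_def sum_UNIV_pair
      sum_distrib_left if_zero_mult sum_if_zero cong: if_cong)
     (subst sum_rotate3, simp)

lemma trace_tensor_id_mult: "trace (tensor_id B ** X) = trace (B ** ptr2 X)"
  by (simp add: trace_def matrix_matrix_mult_def ptr2_def tensor_id_def sum_UNIV_pair
      sum_distrib_left if_zero_mult sum_if_zero cong: if_cong)
     (rule sum.cong, simp, rule sum.swap)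

lemma ptr1_add: "ptr1 (A + B) = ptr1 A + ptr1 B"
  by (simp add: ptr1_def vec_eq_iff sum.distrib)

lemma ptr1_diff: "ptr1 (A - B) = ptr1 A - ptr1 B"
  by (simp add: ptr1_def vec_eq_iff sum_subtractf)

lemma ptr1_scaleR: "ptr1 (c *\<^sub>R A) = c *\<^sub>R ptr1 A"
  by (simp add: ptr1_def vec_eq_iff scaleR_sum_right)

lemma ptr2_add: "ptr2 (A + B) = ptr2 A + ptr2 B"
  by (simp add: ptr2_def vec_eq_iff sum.distrib)

lemma ptr2_diff: "ptr2 (A - B) = ptr2 A - ptr2 B"
  by (simp add: ptr2_def vec_eq_iff sum_subtractf)

lemma ptr2_scaleR: "ptr2 (c *\<^sub>R A) = c *\<^sub>R ptr2 A"
  by (simp add: ptr2_def vec_eq_iff scaleR_sum_right)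

lemma ptr1_id_tensor: "ptr1 (id_tensor A :: 'n::finite bimat) = real CARD('n) *\<^sub>R A"
  by (simp add: ptr1_def id_tensor_def vec_eq_iff scaleR_complex)

lemma ptr2_id_tensor: "ptr2 (id_tensor A :: 'n::finite bimat) = mat (trace A)"
  by (simp add: ptr2_def id_tensor_def vec_eq_iff mat_def trace_def)

lemma ptr1_tensor_id: "ptr1 (tensor_id B :: 'n::finite bimat) = mat (trace B)"
  by (simp add: ptr1_def tensor_id_def vec_eq_iff mat_def trace_def)

lemma ptr2_tensor_id: "ptr2 (tensor_id B :: 'n::finite bimat) = real CARD('n) *\<^sub>R B"
  by (simp add: ptr2_def tensor_id_def vec_eq_iff scaleR_complex)

lemma ptr1_mat_1: "ptr1 (mat 1 :: 'n::finite bimat) = mat (of_nat CARD('n))"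
  by (simp add: ptr1_def vec_eq_iff mat_def)

lemma ptr2_mat_1: "ptr2 (mat 1 :: 'n::finite bimat) = mat (of_nat CARD('n))"
  by (simp add: ptr2_def vec_eq_iff mat_def)

lemma trace_ptr1: "trace (ptr1 A) = trace A"
  by (simp add: ptr1_def trace_def sum_UNIV_pair) (rule sum.swap)

lemma trace_ptr2: "trace (ptr2 A) = trace A"
  by (simp add: ptr2_def trace_def sum_UNIV_pair)

lemma trace_max_mixed: "trace (max_mixed :: complex^'n::finite^'n) = 1"
  by (simp add: max_mixed_def trace_def mat_def)

lemma hermitian_id_tensor: "hermitian A \<Longrightarrow> hermitian (id_tensor A)"
  by (rule hermitianI) (auto simp add: id_tensor_def hermitian_entry[of A, symmetric])

lemma hermitian_tensor_id: "hermitian A \<Longrightarrow> hermitian (tensor_id A)"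
  by (rule hermitianI) (auto simp add: tensor_id_def hermitian_entry[of A, symmetric])

lemma hermitian_ptr1: "hermitian A \<Longrightarrow> hermitian (ptr1 A)"
  by (rule hermitianI) (simp add: ptr1_def hermitian_entry[of A, symmetric])

lemma hermitian_ptr2: "hermitian A \<Longrightarrow> hermitian (ptr2 A)"
  by (rule hermitianI) (simp add: ptr2_def hermitian_entry[of A, symmetric])

definition unit_marginals :: "'n::finite bimat set" where
  "unit_marginals = {X. hermitian X \<and> ptr1 X = max_mixed \<and> ptr2 X = max_mixed}"

lemma convex_unit_marginals: "convex unit_marginals"
  unfolding convex_def unit_marginals_def
  by (auto intro!: hermitian_add hermitian_scaleR
      simp: ptr1_add ptr1_scaleR ptr2_add ptr2_scaleR scaleR_left_distrib[symmetric])

lemma trace_unit_marginals: "X \<in> unit_marginals \<Longrightarrow> trace X = 1"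
  unfolding unit_marginals_def by (metis (mono_tags) mem_Collect_eq trace_ptr1 trace_max_mixed)

text \<open>The orthogonal projection onto the matrices whose partial traces both vanish.\<close>
definition marginal_free_part :: "'n::finite bimat \<Rightarrow> 'n bimat" where
  "marginal_free_part H = H - (1 / real CARD('n)) *\<^sub>R id_tensor (ptr1 H)
     - (1 / real CARD('n)) *\<^sub>R tensor_id (ptr2 H) + (Re (trace H) / (real CARD('n))\<^sup>2) *\<^sub>R mat 1"

lemma hermitian_marginal_free_part: "hermitian H \<Longrightarrow> hermitian (marginal_free_part H)"
  unfolding marginal_free_part_def
  by (intro hermitian_add hermitian_diff hermitian_scaleR hermitian_id_tensor hermitian_tensor_id
      hermitian_ptr1 hermitian_ptr2 hermitian_mat_1)

lemma ptr1_marginal_free_part: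
  assumes "hermitian (H :: 'n::finite bimat)" shows "ptr1 (marginal_free_part H) = 0"
proof -
  have "trace (ptr2 H) = of_real (Re (trace H))"
    using trace_hermitian_eq_Re[OF assms] by (simp add: trace_ptr2)
  moreover have "real CARD('n) > 0" by simp
  ultimately show ?thesis
    by (simp add: marginal_free_part_def ptr1_add ptr1_diff ptr1_scaleR ptr1_id_tensor ptr1_tensor_id
        ptr1_mat_1) (simp add: vec_eq_iff mat_def scaleR_complex field_simps power2_eq_square)
qed

lemma ptr2_marginal_free_part:
  assumes "hermitian (H :: 'n::finite bimat)" shows "ptr2 (marginal_free_part H) = 0"
proof -
  have "trace (ptr1 H) = of_real (Re (trace H))"
    using trace_hermitian_eq_Re[OF assms] by (simp add: trace_ptr1)
  moreover have "real CARD('n) > 0" by simp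
  ultimately show ?thesis
    by (simp add: marginal_free_part_def ptr2_add ptr2_diff ptr2_scaleR ptr2_id_tensor ptr2_tensor_id
        ptr2_mat_1) (simp add: vec_eq_iff mat_def scaleR_complex field_simps power2_eq_square)
qed

lemma trace_marginal_free_part_mult:
  fixes H X :: "'n::finite bimat"
  assumes H: "hermitian H" and X: "X \<in> unit_marginals"
  shows "trace (marginal_free_part H ** X)
    = of_real (Re (trace (H ** X)) - Re (trace H) / (real CARD('n))\<^sup>2)"
proof -
  have X1: "ptr1 X = max_mixed" and X2: "ptr2 X = max_mixed" and "hermitian X"
    using X unfolding unit_marginals_def by auto
  have HX: "trace (H ** X) = of_real (Re (trace (H ** X)))"
    using trace_mult_hermitian_real[OF H \<open>hermitian X\<close>] by (metis Reals_cases Re_complex_of_real)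
  have "trace (ptr1 H) = of_real (Re (trace H))" "trace (ptr2 H) = of_real (Re (trace H))"
    using trace_hermitian_eq_Re[OF H] by (simp_all add: trace_ptr1 trace_ptr2)
  moreover have "real CARD('n) > 0" by simp
  ultimately show ?thesis
    using trace_unit_marginals[OF X]
    by (simp add: marginal_free_part_def matrix_add_rdistrib matrix_diff_rdistrib
        matrix_scaleR_left trace_add trace_sub trace_scaleR trace_id_tensor_mult trace_tensor_id_mult
        X1 X2 max_mixed_def trace_mult_mat)
      (subst HX, simp add: scaleR_complex field_simps power2_eq_square)
qed

lemma trace_mult_scaled_identity: "trace (H ** (c *\<^sub>R mat 1)) = c *\<^sub>R trace (H :: complex^'m^'m)"
  by (metis trace_mul_sym matrix_scaleR_left matrix_mul_lid trace_scaleR)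

lemma witness_of_separation:
  fixes H \<rho> :: "'n::finite bimat" and S :: "'n bimat set"
  assumes H: "hermitian H" and S: "S \<subseteq> unit_marginals" "(1 / (real CARD('n))\<^sup>2) *\<^sub>R mat 1 \<in> S"
    and \<rho>: "\<rho> \<in> unit_marginals" "Re (trace (H ** \<rho>)) < b"
    and above: "\<forall>\<sigma>\<in>S. b < Re (trace (H ** \<sigma>))"
  obtains W where "hermitian W" "ptr1 W = max_mixed" "ptr2 W = max_mixed"
    "\<forall>\<sigma>\<in>S. cnonneg (trace (W ** \<sigma>))" "\<not> cnonneg (trace (W ** \<rho>))"
proof -
  define e where "e = 1 / (real CARD('n))\<^sup>2"
  define c where "c = Re (trace H) / (real CARD('n))\<^sup>2"
  have "b < c"
    using above S(2) by (fastforce simp: e_def c_def trace_mult_scaled_identity)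
  define t where "t = 1 / (c - b) * e"
  have "t > 0" "t * (b - c) = - e"
    using \<open>b < c\<close> by (simp_all add: t_def e_def field_simps)
  define W where "W = t *\<^sub>R marginal_free_part H + e *\<^sub>R mat 1"
  have trace_W: "trace (W ** X) = of_real (t * (Re (trace (H ** X)) - c) + e)" if "X \<in> unit_marginals" for X
    using that by (simp add: W_def c_def matrix_add_rdistrib matrix_scaleR_left trace_add trace_scaleR
        trace_marginal_free_part_mult[OF H] trace_mult_scaled_identity trace_unit_marginals scaleR_complex)
  show thesis
  proof
    show "hermitian W"
      unfolding W_def by (intro hermitian_add hermitian_scaleR hermitian_marginal_free_part[OF H] hermitian_mat_1)
    show "ptr1 W = max_mixed" "ptr2 W = max_mixed"
      by (simp_all add: W_def e_def max_mixed_def ptr1_add ptr1_scaleR ptr2_add ptr2_scaleR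
          ptr1_marginal_free_part[OF H] ptr2_marginal_free_part[OF H] ptr1_mat_1 ptr2_mat_1)
        (simp_all add: vec_eq_iff mat_def scaleR_complex field_simps power2_eq_square)
    show "\<forall>\<sigma>\<in>S. cnonneg (trace (W ** \<sigma>))"
    proof
      fix \<sigma> assume "\<sigma> \<in> S"
      then have "t * (b - c) \<le> t * (Re (trace (H ** \<sigma>)) - c)"
        using above \<open>t > 0\<close> by (intro mult_left_mono) auto
      then show "cnonneg (trace (W ** \<sigma>))"
        using trace_W \<open>\<sigma> \<in> S\<close> S(1) \<open>t * (b - c) = - e\<close> by (auto simp: cnonneg_def)
    qed
    have "t * (Re (trace (H ** \<rho>)) - c) < t * (b - c)"
      using \<rho>(2) \<open>t > 0\<close> by simp
    then show "\<not> cnonneg (trace (W ** \<rho>))"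
      using trace_W[OF \<rho>(1)] \<open>t * (b - c) = - e\<close> by (simp add: cnonneg_def)
  qed
qed

subsection \<open>The convex hull of maximally entangled states\<close>

definition max_entangled :: "complex^'n^'n \<Rightarrow> 'n::finite bimat" where
  "max_entangled U = id_tensor U ** Omega_proj ** cadjoint (id_tensor U)"

lemma Uset_eq: "(Uset :: 'n::finite bimat set) = convex hull (max_entangled ` {U. unitary U})"
  unfolding Uset_def max_entangled_def by (rule arg_cong[where f="\<lambda>S. convex hull S"]) auto

lemma Omega_proj_eq:
  "(Omega_proj :: 'n::finite bimat) =
     (\<chi> p q. if fst p = snd p then if fst q = snd q then of_real (1 / real CARD('n)) else 0 else 0)"
proof -
  have "complex_of_real (1 / sqrt (real CARD('n))) * cnj (complex_of_real (1 / sqrt (real CARD('n))))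
     = of_real (1 / real CARD('n))"
    by (simp add: of_real_mult[symmetric] del: of_real_mult)
  then show ?thesis by (simp add: Omega_proj_def Omega_def vec_eq_iff)
qed

lemma max_entangled_eq:
  "max_entangled (U :: complex^'n::finite^'n) =
     (\<chi> p q. U $ snd p $ fst p * cnj (U $ snd q $ fst q) * of_real (1 / real CARD('n)))"
proof -
  have "id_tensor U ** (Omega_proj :: 'n bimat) =
     (\<chi> p q. if fst q = snd q then U $ snd p $ fst p * of_real (1 / real CARD('n)) else 0)"
    by (simp add: Omega_proj_eq id_tensor_def matrix_matrix_mult_def vec_eq_iff sum_UNIV_pair
        if_zero_mult sum_if_zero mult_if_zero if_zero_divide cong: if_cong)
  then show ?thesis
    by (simp add: max_entangled_def id_tensor_def cadjoint_def matrix_matrix_mult_def vec_eq_iff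
        sum_UNIV_pair if_zero_mult sum_if_zero mult_if_zero if_zero_divide cnj_if_zero mult_ac cong: if_cong)
qed

lemma unitary_columns:
  "unitary U \<Longrightarrow> (\<Sum>k\<in>UNIV. cnj (U $ k $ i) * U $ k $ j) = (if i = j then 1 else 0)"
  unfolding unitary_def
  by (drule arg_cong[where f="\<lambda>M. M $ i $ j"]) (simp add: matrix_matrix_mult_def cadjoint_def mat_def)

lemma unitary_rows:
  "unitary U \<Longrightarrow> (\<Sum>k\<in>UNIV. U $ i $ k * cnj (U $ j $ k)) = (if i = j then 1 else 0)"
  unfolding unitary_def
  by (drule matrix_left_right_inverse[THEN iffD1], drule arg_cong[where f="\<lambda>M. M $ i $ j"])
     (simp add: matrix_matrix_mult_def cadjoint_def mat_def)

lemma max_entangled_in_unit_marginals: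
  assumes "unitary (U :: complex^'n::finite^'n)" shows "max_entangled U \<in> unit_marginals"
proof -
  have "hermitian (max_entangled U)"
    by (rule hermitianI) (simp add: max_entangled_eq)
  moreover have "ptr1 (max_entangled U) = max_mixed"
    by (simp add: ptr1_def max_entangled_eq max_mixed_def mat_def vec_eq_iff
        sum_divide_distrib[symmetric] unitary_rows[OF assms])
  moreover have "(\<Sum>k\<in>UNIV. U $ k $ i * cnj (U $ k $ j)) = (if i = j then 1 else 0)" for i j
    using unitary_columns[OF assms, of j i] by (auto simp: mult.commute)
  then have "ptr2 (max_entangled U) = max_mixed"
    by (simp add: ptr2_def max_entangled_eq max_mixed_def mat_def vec_eq_iff sum_divide_distrib[symmetric])
  ultimately show ?thesis unfolding unit_marginals_def by blast
qed

lemma Uset_subset_unit_marginals: "Uset \<subseteq> unit_marginals"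
  unfolding Uset_eq
  by (rule hull_minimal) (auto simp: max_entangled_in_unit_marginals convex_unit_marginals)

lemma closed_unitary: "closed {U :: complex^'n::finite^'n. unitary U}"
proof -
  have "unitary U \<longleftrightarrow> (\<chi> i j. \<Sum>k\<in>UNIV. cnj (U $ k $ i) * U $ k $ j) = mat 1" for U :: "complex^'n^'n"
    by (simp add: unitary_def matrix_matrix_mult_def cadjoint_def)
  then show ?thesis by (simp only:) (intro closed_Collect_eq continuous_intros)
qed

lemma norm_unitary:
  assumes "unitary (U :: complex^'n::finite^'n)" shows "norm U = sqrt (real CARD('n))"
proof -
  have "(\<Sum>k\<in>UNIV. (norm (U $ k $ i))\<^sup>2) = 1" for i
  proof -
    have "complex_of_real (\<Sum>k\<in>UNIV. (norm (U $ k $ i))\<^sup>2) = (\<Sum>k\<in>UNIV. cnj (U $ k $ i) * U $ k $ i)"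
      by (simp only: of_real_sum complex_norm_square mult.commute)
    also have "\<dots> = 1"
      using unitary_columns[OF assms, of i i] by simp
    finally show ?thesis by (simp only: of_real_eq_1_iff)
  qed
  then have "(\<Sum>k\<in>UNIV. \<Sum>i\<in>UNIV. (norm (U $ k $ i))\<^sup>2) = real CARD('n)"
    by (subst sum.swap) simp
  then show ?thesis
    by (simp add: norm_vec_def L2_set_def sum_nonneg)
qed

lemma compact_Uset: "compact (Uset :: 'n::finite bimat set)"
proof -
  have "bounded {U :: complex^'n^'n. unitary U}"
    unfolding bounded_iff using norm_unitary by (metis mem_Collect_eq order_refl)
  then have "compact {U :: complex^'n^'n. unitary U}"
    using closed_unitary by (simp add: compact_eq_bounded_closed)
  moreover have "continuous_on UNIV (max_entangled :: complex^'n^'n \<Rightarrow> 'n bimat)"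
    unfolding max_entangled_eq[abs_def] by (intro continuous_intros)
  ultimately show ?thesis
    unfolding Uset_eq
    by (intro compact_convex_hull compact_continuous_image) (auto intro: continuous_on_subset)
qed


subsection \<open>The maximally mixed state as an average of maximally entangled states\<close>

definition sign_at :: "('n \<Rightarrow> bool) \<Rightarrow> 'n \<Rightarrow> real" where
  "sign_at s i = (if s i then 1 else -1)"

lemma sum_sign_at_mult:
  fixes i j :: "'n::finite"
  shows "(\<Sum>s\<in>UNIV. sign_at s i * sign_at s j) = (if i = j then real CARD('n \<Rightarrow> bool) else 0)"
proof (cases "i = j")
  case True
  have "sign_at s i * sign_at s i = 1" for s
    by (simp add: sign_at_def)
  with True show ?thesis by simp
next
  case False
  let ?flip = "\<lambda>s :: 'n \<Rightarrow> bool. s(i := \<not> s i)"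
  have "(\<Sum>s\<in>UNIV. sign_at s i * sign_at s j) = (\<Sum>s\<in>UNIV. sign_at (?flip s) i * sign_at (?flip s) j)"
    by (rule sum.reindex_bij_witness[where i="?flip" and j="?flip"]) auto
  also have "\<dots> = - (\<Sum>s\<in>UNIV. sign_at s i * sign_at s j)"
  proof -
    have "sign_at (?flip s) i * sign_at (?flip s) j = - (sign_at s i * sign_at s j)" for s
      using False by (simp add: sign_at_def)
    then show ?thesis by (simp add: sum_negf)
  qed
  finally show ?thesis using False by simp
qed

text \<open>Composing with a transposition shows that \<open>\<pi> i\<close> is equidistributed over all permutations.\<close>
lemma card_bij_apply_eq:
  fixes i k :: "'n::finite"
  shows "(\<Sum>\<pi>\<in>{\<pi>::'n \<Rightarrow> 'n. bij \<pi>}. if \<pi> i = k then 1 else 0 :: real)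
       = real (card {\<pi>::'n \<Rightarrow> 'n. bij \<pi>}) / real CARD('n)"
proof -
  let ?count = "\<lambda>k. (\<Sum>\<pi>\<in>{\<pi>::'n \<Rightarrow> 'n. bij \<pi>}. if \<pi> i = k then 1 else 0 :: real)"
  have "?count k' = ?count k" for k'
    by (rule sum.reindex_bij_witness[where i="\<lambda>\<pi>. Transposition.transpose k' k \<circ> \<pi>"
          and j="\<lambda>\<pi>. Transposition.transpose k' k \<circ> \<pi>"])
       (auto simp: fun_eq_iff transpose_eq_iff intro: bij_comp)
  then have "real CARD('n) * ?count k = (\<Sum>k'\<in>UNIV. ?count k')"
    using sum.cong[OF refl, of UNIV ?count "\<lambda>_. ?count k"] by simp
  also have "\<dots> = (\<Sum>\<pi>\<in>{\<pi>::'n \<Rightarrow> 'n. bij \<pi>}. \<Sum>k'\<in>UNIV. if \<pi> i = k' then 1 else 0 :: real)"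
    by (rule sum.swap)
  also have "\<dots> = real (card {\<pi>::'n \<Rightarrow> 'n. bij \<pi>})"
    by simp
  finally show ?thesis by (simp add: field_simps)
qed

definition signed_perm :: "('n \<Rightarrow> 'n) \<Rightarrow> ('n \<Rightarrow> bool) \<Rightarrow> complex^'n^'n" where
  "signed_perm \<pi> s = (\<chi> k i. of_real (if k = \<pi> i then sign_at s i else 0))"

lemma unitary_signed_perm:
  fixes \<pi> :: "'n::finite \<Rightarrow> 'n"
  assumes "bij \<pi>" shows "unitary (signed_perm \<pi> s)"
proof -
  have "\<pi> i = \<pi> j \<longleftrightarrow> i = j" for i j
    using bij_is_inj[OF assms] by (auto dest: injD)
  then have "(\<Sum>k\<in>UNIV. (if k = \<pi> i then sign_at s i else 0) * (if k = \<pi> j then sign_at s j else 0))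
      = (if i = j then 1 else 0)" for i j
    by (simp add: if_zero_mult mult_if_zero sum_if_zero sign_at_def)
  then show ?thesis
    by (simp add: unitary_def signed_perm_def matrix_matrix_mult_def cadjoint_def mat_def vec_eq_iff
        of_real_sum[symmetric] of_real_mult[symmetric] del: of_real_sum of_real_mult)
qed

lemma sum_signed_perm_entries:
  fixes i j k l :: "'n::finite"
  shows "(\<Sum>\<pi>\<in>{\<pi>::'n \<Rightarrow> 'n. bij \<pi>}. \<Sum>s\<in>UNIV.
            (if k = \<pi> i then sign_at s i else 0) * (if l = \<pi> j then sign_at s j else 0))
     = (if i = j \<and> k = l
        then real (card {\<pi>::'n \<Rightarrow> 'n. bij \<pi>}) * real CARD('n \<Rightarrow> bool) / real CARD('n) else 0)"
proof -
  have "(\<Sum>s\<in>UNIV. (if k = \<pi> i then sign_at s i else 0) * (if l = \<pi> j then sign_at s j else 0))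
     = (if i = j \<and> k = l \<and> \<pi> i = k then real CARD('n \<Rightarrow> bool) else 0)" for \<pi> :: "'n \<Rightarrow> 'n"
    by (auto simp: if_zero_mult mult_if_zero sum_if_zero sum_sign_at_mult)
  moreover have "(\<Sum>\<pi>\<in>{\<pi>::'n \<Rightarrow> 'n. bij \<pi>}. if \<pi> i = k then real CARD('n \<Rightarrow> bool) else 0)
      = real CARD('n \<Rightarrow> bool) * (\<Sum>\<pi>\<in>{\<pi>::'n \<Rightarrow> 'n. bij \<pi>}. if \<pi> i = k then 1 else 0)"
    by (simp add: sum_distrib_left if_distrib cong: if_cong)
  ultimately show ?thesis
    by (cases "i = j \<and> k = l") (auto simp: card_bij_apply_eq)
qed

lemma max_entangled_signed_perm_entry:
  "max_entangled (signed_perm \<pi> s :: complex^'n::finite^'n) $ (i, k) $ (j, l)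
     = of_real ((if k = \<pi> i then sign_at s i else 0) * (if l = \<pi> j then sign_at s j else 0) / real CARD('n))"
  by (simp add: max_entangled_eq signed_perm_def)

lemma maximally_mixed_in_Uset: "((1 / (real CARD('n))\<^sup>2) *\<^sub>R mat 1 :: 'n::finite bimat) \<in> Uset"
proof -
  let ?P = "{\<pi>::'n \<Rightarrow> 'n. bij \<pi>}"
  let ?I = "?P \<times> (UNIV :: ('n \<Rightarrow> bool) set)"
  define w where "w = 1 / (real (card ?P) * real CARD('n \<Rightarrow> bool))"
  have "card ?P > 0"
    by (metis (mono_tags) bij_id card_gt_0_iff empty_iff finite mem_Collect_eq)
  then have weights: "(\<Sum>x\<in>?I. w) = 1"
    by (simp add: w_def card_cartesian_product) (use bij_id in blast)
  have "(\<Sum>x\<in>?I. w *\<^sub>R max_entangled (signed_perm (fst x) (snd x))) \<in> Uset"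
  proof (rule convex_sum)
    show "convex (Uset :: 'n bimat set)"
      unfolding Uset_def by (rule convex_convex_hull)
    show "max_entangled (signed_perm (fst x) (snd x)) \<in> Uset" if "x \<in> ?I" for x
      unfolding Uset_eq using that by (auto intro!: hull_inc unitary_signed_perm)
  qed (use weights bij_id in \<open>auto simp: w_def\<close>)
  moreover have "(\<Sum>x\<in>?I. w *\<^sub>R max_entangled (signed_perm (fst x) (snd x)))
      = ((1 / (real CARD('n))\<^sup>2) *\<^sub>R mat 1 :: 'n bimat)"
  proof -
    have "(\<Sum>x\<in>?I. w *\<^sub>R max_entangled (signed_perm (fst x) (snd x))) $ p $ q
        = ((1 / (real CARD('n))\<^sup>2) *\<^sub>R mat 1 :: 'n bimat) $ p $ q" for p q
    proof -
      obtain i k j l where pq: "p = (i, k)" "q = (j, l)"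
        by fastforce
      let ?f = "\<lambda>\<pi> s. (if k = \<pi> i then sign_at s i else 0) * (if l = \<pi> j then sign_at s j else 0)"
      have "(\<Sum>x\<in>?I. w *\<^sub>R max_entangled (signed_perm (fst x) (snd x))) $ (i, k) $ (j, l)
          = of_real (\<Sum>x\<in>?I. w * ?f (fst x) (snd x) / real CARD('n))"
        by (simp add: sum_component vector_scaleR_component max_entangled_signed_perm_entry scaleR_complex)
      also have "(\<Sum>x\<in>?I. w * ?f (fst x) (snd x) / real CARD('n))
          = w / real CARD('n) * (\<Sum>\<pi>\<in>?P. \<Sum>s\<in>UNIV. ?f \<pi> s)"
        by (simp only: sum.cartesian_product' fst_conv snd_conv sum_distrib_left) (simp add: field_simps)
      also have "\<dots> = (if i = j \<and> k = l then 1 / (real CARD('n))\<^sup>2 else 0)"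
        using \<open>card ?P > 0\<close> bij_id by (auto simp: sum_signed_perm_entries w_def power2_eq_square)
      also have "complex_of_real \<dots> = ((1 / (real CARD('n))\<^sup>2) *\<^sub>R mat 1 :: 'n bimat) $ (i, k) $ (j, l)"
        by (simp add: mat_def scaleR_complex)
      finally show ?thesis
        unfolding pq .
    qed
    then show ?thesis by (simp add: vec_eq_iff)
  qed
  ultimately show ?thesis by simp
qed

definition hermitian_part :: "complex^'m^'m \<Rightarrow> complex^'m^'m" where
  "hermitian_part A = (1 / 2) *\<^sub>R (cadjoint A + A)"

lemma hermitian_hermitian_part: "hermitian (hermitian_part A)"
  unfolding hermitian_part_def
  by (intro hermitian_scaleR, rule hermitianI) (simp add: cadjoint_def add.commute)

lemma inner_eq_Re_trace_hermitian_part: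
  fixes A X :: "complex^'m::finite^'m"
  assumes "hermitian X"
  shows "inner A X = Re (trace (hermitian_part A ** X))"
proof -
  have "inner A X = (\<Sum>p\<in>UNIV. \<Sum>q\<in>UNIV. Re (A $ p $ q * cnj (X $ p $ q)))"
    by (simp add: inner_vec_def inner_complex_def)
  moreover have "(\<Sum>p\<in>UNIV. \<Sum>q\<in>UNIV. Re (cnj (A $ q $ p) * X $ q $ p))
      = (\<Sum>p\<in>UNIV. \<Sum>q\<in>UNIV. Re (A $ p $ q * cnj (X $ p $ q)))"
    by (subst sum.swap) (simp add: mult.commute)
  moreover have "(\<Sum>p\<in>UNIV. \<Sum>q\<in>UNIV. Re (A $ p $ q * X $ q $ p))
      = (\<Sum>p\<in>UNIV. \<Sum>q\<in>UNIV. Re (A $ p $ q * cnj (X $ p $ q)))"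
    by (simp add: hermitian_entry[OF assms, symmetric])
  moreover have "Re (trace (hermitian_part A ** X))
      = ((\<Sum>p\<in>UNIV. \<Sum>q\<in>UNIV. Re (cnj (A $ q $ p) * X $ q $ p))
         + (\<Sum>p\<in>UNIV. \<Sum>q\<in>UNIV. Re (A $ p $ q * X $ q $ p))) / 2"
    by (simp add: hermitian_part_def trace_def matrix_matrix_mult_def cadjoint_def scaleR_complex
        distrib_right sum.distrib sum_divide_distrib[symmetric] Re_divide_numeral)
  ultimately show ?thesis by simp
qed

lemma separating_hermitian_from_Uset:
  fixes \<rho> :: "'n::finite bimat"
  assumes "\<rho> \<notin> Uset" "hermitian \<rho>"
  obtains H b where "hermitian H" "Re (trace (H ** \<rho>)) < b" "\<forall>\<sigma>\<in>Uset. b < Re (trace (H ** \<sigma>))"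
proof -
  have "convex (Uset :: 'n bimat set)"
    unfolding Uset_def by (rule convex_convex_hull)
  then obtain A b where "inner A \<rho> < b" "\<forall>\<sigma>\<in>Uset. b < inner A \<sigma>"
    using separating_hyperplane_closed_point[OF _ compact_imp_closed[OF compact_Uset] assms(1)] by blast
  moreover have "hermitian \<sigma>" if "\<sigma> \<in> Uset" for \<sigma>
    using that Uset_subset_unit_marginals unfolding unit_marginals_def by blast
  ultimately show thesis
    using assms(2) hermitian_hermitian_part
    by (intro that[of "hermitian_part A" b]) (auto simp: inner_eq_Re_trace_hermitian_part)
qed

theorem proposition2:
  fixes \<rho> :: "('n::finite) bimat"
  assumes "\<rho> \<in> Sset"
  shows "\<rho> \<in> Uset \<longleftrightarrow>
    (\<forall>W :: 'n bimat. hermitian W \<and> ptr1 W = max_mixed \<and> ptr2 W = max_mixed \<and>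
        (\<forall>\<sigma>\<in>Uset. cnonneg (trace (W ** \<sigma>)))
      \<longrightarrow> cnonneg (trace (W ** \<rho>)))"
    (is "_ \<longleftrightarrow> (\<forall>W. ?witness W \<longrightarrow> _)")
proof
  show "\<rho> \<in> Uset \<Longrightarrow> \<forall>W. ?witness W \<longrightarrow> cnonneg (trace (W ** \<rho>))"
    by blast
next
  assume no_witness: "\<forall>W. ?witness W \<longrightarrow> cnonneg (trace (W ** \<rho>))"
  show "\<rho> \<in> Uset"
  proof (rule ccontr)
    assume "\<rho> \<notin> Uset"
    have \<rho>: "\<rho> \<in> unit_marginals"
      using assms psd_hermitian unfolding Sset_def unit_marginals_def by blast
    then obtain H b where "hermitian H" "Re (trace (H ** \<rho>)) < b" "\<forall>\<sigma>\<in>Uset. b < Re (trace (H ** \<sigma>))"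
      using separating_hermitian_from_Uset \<open>\<rho> \<notin> Uset\<close> unfolding unit_marginals_def by blast
    then obtain W where "?witness W" "\<not> cnonneg (trace (W ** \<rho>))"
      using witness_of_separation[OF _ Uset_subset_unit_marginals maximally_mixed_in_Uset \<rho>] by metis
    with no_witness show False by blast
  qed
qed

end
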